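(* Let $P_{XY}$ be a probability measure on $\mathcal X\times\mathcal Y$ with $|\mathcal X|=M$, let $\mathcal L:\mathcal Y\to2^{\mathcal X}$ be a decision rule with $|\mathcal L(y)|\ge1$ for all $y$, and $P_{\mathcal L}:=\mathbb P[X\notin\mathcal L(Y)]$. Then for every $\gamma\ge1$, $$P_{\mathcal L}\ge\frac{1+\gamma}2-\frac{\gamma\,\mathbb E[|\mathcal L(Y)|]}M-\frac12\mathbb E\Big[\sum_{x\in\mathcal X}\Big|P_{X|Y}(x|Y)-\frac\gamma M\Big|\Big].$$ Moreover, let $\gamma\ge1$ with $|\mathcal L(y)|\le M/\gamma$ for all $y$, suppose for each $y$ the list consists of the $|\mathcal L(y)|$ most probable elements given $Y=y$, and let $x_\ell(y)$ be the $\ell$-th most probable element given $Y=y$ (ties broken arbitrarily). If there is $\alpha:\mathcal Y\to[0,1]$ with $\frac\gamma M\le\alpha(y)\le\frac1{|\mathcal L(y)|}$ for all $y$, such that $P_{X|Y}(x_\ell(y)|y)=\alpha(y)$ for $\ell\le|\mathcal L(y)|$ and $P_{X|Y}(x_\ell(y)|y)=\frac{1-\alpha(y)|\mathcal L(y)|}{M-|\mathcal L(y)|}$ for $|\mathcal L(y)|<\ell\le M$, then the bound holds with equality.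
   Context: $2^{\mathcal X}$ is the power set of $\mathcal X$; $P_{X|Y}$ is the conditional probability mass function of $X$ given $Y$. *)

theory Defs
  imports "HOL-Probability.Probability"
begin

text \<open>The joint law P_XY on X x Y (X finite) is represented by its disintegration:
  the marginal law PY of Y (a probability measure on Y) and the conditional pmf
  Pc y x = P_{X|Y}(x|y), measurable in y.\<close>

definition list_error :: "'y measure \<Rightarrow> ('y \<Rightarrow> 'x \<Rightarrow> real) \<Rightarrow> ('y \<Rightarrow> 'x set) \<Rightarrow> real" where
  "list_error PY Pc L = (\<integral>y. (\<Sum>x\<in>UNIV - L y. Pc y x) \<partial>PY)"

definition lower_bound13 ::
  "'y measure \<Rightarrow> ('y \<Rightarrow> 'x::finite \<Rightarrow> real) \<Rightarrow> ('y \<Rightarrow> 'x set) \<Rightarrow> real \<Rightarrow> real" where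
  "lower_bound13 PY Pc L \<gamma> =
     (1 + \<gamma>) / 2 - \<gamma> * (\<integral>y. real (card (L y)) \<partial>PY) / real CARD('x)
     - 1/2 * (\<integral>y. (\<Sum>x\<in>UNIV. \<bar>Pc y x - \<gamma> / real CARD('x)\<bar>) \<partial>PY)"

end

theory Submission
  imports Defs
begin

text \<open>Pointwise in \<open>y\<close>, with the threshold \<open>c = \<gamma>/M\<close>, the mass outside the list equals the
  bound plus half of the slack in \<open>p x - c \<le> \<bar>p x - c\<bar>\<close> on the list and in
  \<open>c - p x \<le> \<bar>p x - c\<bar>\<close> off the list. The slack vanishes exactly when the list consists of
  elements above the threshold and the rest lies below it. For the flat profile of the equality
  statement this only needs \<open>\<gamma>/M \<le> \<alpha>(y)\<close> and \<open>\<gamma> \<ge> 1\<close>.\<close>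

definition threshold_bound :: "('x::finite \<Rightarrow> real) \<Rightarrow> 'x set \<Rightarrow> real \<Rightarrow> real" where
  "threshold_bound p L c =
     (1 + c * real CARD('x)) / 2 - c * real (card L) - (\<Sum>x\<in>UNIV. \<bar>p x - c\<bar>) / 2"

lemma sum_compl_eq_threshold_bound_plus_slack:
  fixes p :: "'x::finite \<Rightarrow> real"
  assumes "(\<Sum>x\<in>UNIV. p x) = 1"
  shows "(\<Sum>x\<in>UNIV - L. p x) = threshold_bound p L c
           + ((\<Sum>x\<in>L. \<bar>p x - c\<bar> - (p x - c)) + (\<Sum>x\<in>UNIV - L. \<bar>p x - c\<bar> - (c - p x))) / 2"
proof -
  have card_compl: "real (card (UNIV - L)) = real CARD('x) - real (card L)"
    by (simp add: card_Diff_subset card_mono of_nat_diff)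
  have "(\<Sum>x\<in>UNIV. p x) = (\<Sum>x\<in>L. p x) + (\<Sum>x\<in>UNIV - L. p x)"
    using sum.subset_diff[of L UNIV p] by simp
  moreover have "(\<Sum>x\<in>UNIV. \<bar>p x - c\<bar>) = (\<Sum>x\<in>L. \<bar>p x - c\<bar>) + (\<Sum>x\<in>UNIV - L. \<bar>p x - c\<bar>)"
    using sum.subset_diff[of L UNIV "\<lambda>x. \<bar>p x - c\<bar>"] by simp
  moreover have "(\<Sum>x\<in>L. \<bar>p x - c\<bar> - (p x - c))
      = (\<Sum>x\<in>L. \<bar>p x - c\<bar>) - (\<Sum>x\<in>L. p x) + c * real (card L)"
    by (simp add: sum_subtractf)
  moreover have "(\<Sum>x\<in>UNIV - L. \<bar>p x - c\<bar> - (c - p x))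
      = (\<Sum>x\<in>UNIV - L. \<bar>p x - c\<bar>) - c * (real CARD('x) - real (card L)) + (\<Sum>x\<in>UNIV - L. p x)"
    by (simp add: sum_subtractf card_compl)
  ultimately show ?thesis
    using assms unfolding threshold_bound_def by (simp add: field_simps)
qed

lemma threshold_bound_le_sum_compl:
  fixes p :: "'x::finite \<Rightarrow> real"
  assumes "(\<Sum>x\<in>UNIV. p x) = 1"
  shows "threshold_bound p L c \<le> (\<Sum>x\<in>UNIV - L. p x)"
proof -
  have "0 \<le> (\<Sum>x\<in>L. \<bar>p x - c\<bar> - (p x - c))" "0 \<le> (\<Sum>x\<in>UNIV - L. \<bar>p x - c\<bar> - (c - p x))"
    by (auto intro: sum_nonneg)
  then show ?thesis
    using sum_compl_eq_threshold_bound_plus_slack[OF assms, of L c] by simp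
qed

lemma threshold_bound_eq_sum_compl:
  fixes p :: "'x::finite \<Rightarrow> real"
  assumes "(\<Sum>x\<in>UNIV. p x) = 1"
    and "\<And>x. x \<in> L \<Longrightarrow> c \<le> p x" and "\<And>x. x \<notin> L \<Longrightarrow> p x \<le> c"
  shows "threshold_bound p L c = (\<Sum>x\<in>UNIV - L. p x)"
proof -
  have "(\<Sum>x\<in>L. \<bar>p x - c\<bar> - (p x - c)) = 0" "(\<Sum>x\<in>UNIV - L. \<bar>p x - c\<bar> - (c - p x)) = 0"
    using assms(2,3) by (auto intro!: sum.neutral)
  then show ?thesis
    using sum_compl_eq_threshold_bound_plus_slack[OF assms(1), of L c] by simp
qed

lemma flat_profile_separated_by_threshold:
  fixes p :: "'x::finite \<Rightarrow> real"
  assumes \<sigma>: "bij_betw \<sigma> {1..CARD('x)} UNIV" and L: "L = \<sigma> ` {1..k}"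
    and top: "\<forall>l \<in> {1..k}. p (\<sigma> l) = a"
    and bottom: "\<forall>l \<in> {k<..CARD('x)}. p (\<sigma> l) = (1 - a * real k) / (real CARD('x) - real k)"
    and "c \<le> a" and "1 \<le> c * real CARD('x)"
  shows "x \<in> L \<Longrightarrow> c \<le> p x" and "x \<notin> L \<Longrightarrow> p x \<le> c"
proof -
  show "x \<in> L \<Longrightarrow> c \<le> p x"
    using L top \<open>c \<le> a\<close> by auto
  assume "x \<notin> L"
  obtain l where l: "l \<in> {1..CARD('x)}" "x = \<sigma> l"
    using \<sigma> by (metis UNIV_I bij_betw_def imageE)
  with \<open>x \<notin> L\<close> L have "l \<in> {k<..CARD('x)}" by auto
  then have gap: "real CARD('x) - real k > 0" and px: "p x = (1 - a * real k) / (real CARD('x) - real k)"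
    using bottom l by auto
  have "1 - a * real k \<le> c * real CARD('x) - c * real k"
    using mult_left_mono[OF \<open>c \<le> a\<close>, of "real k"] \<open>1 \<le> c * real CARD('x)\<close> by (simp add: mult.commute)
  then show "p x \<le> c"
    using gap by (simp add: px divide_le_eq algebra_simps)
qed

lemma borel_measurable_card_list:
  fixes L :: "'y \<Rightarrow> 'x::finite set"
  assumes "\<And>x. {y \<in> space M. x \<in> L y} \<in> sets M"
  shows "(\<lambda>y. real (card (L y))) \<in> borel_measurable M"
proof -
  have "real (card (L y)) = (\<Sum>x\<in>UNIV. if x \<in> L y then 1 else 0)" for y
    by (simp add: sum.If_cases)
  then show ?thesis
    by (simp only:) (intro borel_measurable_sum measurable_If borel_measurable_const assms)
qed

lemma borel_measurable_sum_compl_list: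
  fixes p :: "'y \<Rightarrow> 'x::finite \<Rightarrow> real" and L :: "'y \<Rightarrow> 'x set"
  assumes "\<And>x. (\<lambda>y. p y x) \<in> borel_measurable M" and "\<And>x. {y \<in> space M. x \<in> L y} \<in> sets M"
  shows "(\<lambda>y. \<Sum>x\<in>UNIV - L y. p y x) \<in> borel_measurable M"
proof -
  have "(\<Sum>x\<in>UNIV - L y. p y x) = (\<Sum>x\<in>UNIV. if x \<in> L y then 0 else p y x)" for y
    by (simp add: sum.If_cases Compl_eq_Diff_UNIV)
  then show ?thesis
    by (simp only:) (intro borel_measurable_sum measurable_If borel_measurable_const assms)
qed

lemma (in prob_space) lower_bound13_eq_integral_threshold_bound:
  fixes Pc :: "'a \<Rightarrow> 'x::finite \<Rightarrow> real"
  assumes Pc: "\<And>x. (\<lambda>y. Pc y x) \<in> borel_measurable M" "\<And>y x. 0 \<le> Pc y x" "\<And>y. (\<Sum>x\<in>UNIV. Pc y x) = 1"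
    and L: "\<And>x. {y \<in> space M. x \<in> L y} \<in> sets M"
  shows "lower_bound13 M Pc L \<gamma> = (\<integral>y. threshold_bound (Pc y) (L y) (\<gamma> / real CARD('x)) \<partial>M)"
proof -
  define c where "c = \<gamma> / real CARD('x)"
  have card_int: "integrable M (\<lambda>y. real (card (L y)))"
    by (rule integrable_const_bound[where B = "real CARD('x)"])
       (auto simp: card_mono borel_measurable_card_list[OF L])
  have Pc_le_1: "Pc y x \<le> 1" for y x
    using member_le_sum[of x UNIV "Pc y"] Pc(2,3) by simp
  have "\<bar>Pc y x - c\<bar> \<le> 1 + \<bar>c\<bar>" for y x
    using Pc(2)[of y x] Pc_le_1[of y x] by arith
  then have "(\<Sum>x\<in>UNIV. \<bar>Pc y x - c\<bar>) \<le> real CARD('x) * (1 + \<bar>c\<bar>)" for y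
    using sum_mono[of UNIV "\<lambda>x. \<bar>Pc y x - c\<bar>" "\<lambda>_. 1 + \<bar>c\<bar>"] by simp
  then have dev_int: "integrable M (\<lambda>y. \<Sum>x\<in>UNIV. \<bar>Pc y x - c\<bar>)"
    by (intro integrable_const_bound[where B = "real CARD('x) * (1 + \<bar>c\<bar>)"])
       (auto simp: sum_nonneg intro!: borel_measurable_sum borel_measurable_abs borel_measurable_diff Pc(1))
  have "(\<integral>y. threshold_bound (Pc y) (L y) c \<partial>M)
      = (1 + c * real CARD('x)) / 2 - c * (\<integral>y. real (card (L y)) \<partial>M)
        - (\<integral>y. (\<Sum>x\<in>UNIV. \<bar>Pc y x - c\<bar>) \<partial>M) / 2"
    unfolding threshold_bound_def using card_int dev_int by (simp add: prob_space)
  then show ?thesis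
    unfolding lower_bound13_def c_def by simp
qed

lemma (in prob_space) lower_bound13_le_list_error:
  fixes Pc :: "'a \<Rightarrow> 'x::finite \<Rightarrow> real"
  assumes Pc: "\<And>x. (\<lambda>y. Pc y x) \<in> borel_measurable M" "\<And>y x. 0 \<le> Pc y x" "\<And>y. (\<Sum>x\<in>UNIV. Pc y x) = 1"
    and L: "\<And>x. {y \<in> space M. x \<in> L y} \<in> sets M"
  shows "lower_bound13 M Pc L \<gamma> \<le> list_error M Pc L"
proof -
  have "(\<Sum>x\<in>UNIV - L y. Pc y x) \<le> (\<Sum>x\<in>UNIV. Pc y x)" for y
    by (rule sum_mono2) (auto intro: Pc(2))
  then have "integrable M (\<lambda>y. \<Sum>x\<in>UNIV - L y. Pc y x)"
    by (intro integrable_const_bound[where B = 1])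
       (auto simp: Pc(2,3) sum_nonneg intro!: borel_measurable_sum_compl_list Pc(1) L)
  then show ?thesis
    unfolding lower_bound13_eq_integral_threshold_bound[OF assms] list_error_def using Pc(2,3)
    by (intro integral_mono_AE' AE_I2 threshold_bound_le_sum_compl sum_nonneg)
qed

lemma (in prob_space) list_error_eq_lower_bound13:
  fixes Pc :: "'a \<Rightarrow> 'x::finite \<Rightarrow> real"
  assumes Pc: "\<And>x. (\<lambda>y. Pc y x) \<in> borel_measurable M" "\<And>y x. 0 \<le> Pc y x" "\<And>y. (\<Sum>x\<in>UNIV. Pc y x) = 1"
    and L: "\<And>x. {y \<in> space M. x \<in> L y} \<in> sets M"
    and "\<And>y x. x \<in> L y \<Longrightarrow> \<gamma> / real CARD('x) \<le> Pc y x"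
    and "\<And>y x. x \<notin> L y \<Longrightarrow> Pc y x \<le> \<gamma> / real CARD('x)"
  shows "list_error M Pc L = lower_bound13 M Pc L \<gamma>"
  unfolding lower_bound13_eq_integral_threshold_bound[OF Pc L] list_error_def
  using assms(3-) by (simp add: threshold_bound_eq_sum_compl)

theorem theorem13:
  fixes PY :: "'y measure" and Pc :: "'y \<Rightarrow> 'x::finite \<Rightarrow> real" and L :: "'y \<Rightarrow> 'x set"
  assumes "prob_space PY"
    and "\<And>x. (\<lambda>y. Pc y x) \<in> borel_measurable PY"
    and "\<And>y x. Pc y x \<ge> 0"
    and "\<And>y. (\<Sum>x\<in>UNIV. Pc y x) = 1"
    and "\<And>x. {y \<in> space PY. x \<in> L y} \<in> sets PY"
    and "\<And>y. card (L y) \<ge> 1"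
  shows "(\<forall>\<gamma>::real. \<gamma> \<ge> 1 \<longrightarrow> list_error PY Pc L \<ge> lower_bound13 PY Pc L \<gamma>)
    \<and> (\<forall>(\<gamma>::real) (\<alpha>::'y \<Rightarrow> real).
           \<gamma> \<ge> 1
         \<and> (\<forall>y. real (card (L y)) \<le> real CARD('x) / \<gamma>)
         \<and> (\<forall>y. 0 \<le> \<alpha> y \<and> \<alpha> y \<le> 1)
         \<and> (\<forall>y. \<gamma> / real CARD('x) \<le> \<alpha> y \<and> \<alpha> y \<le> 1 / real (card (L y)))
         \<and> (\<forall>y. \<exists>\<sigma> :: nat \<Rightarrow> 'x.
               bij_betw \<sigma> {1..CARD('x)} UNIV
             \<and> (\<forall>i j. 1 \<le> i \<and> i \<le> j \<and> j \<le> CARD('x) \<longrightarrow> Pc y (\<sigma> j) \<le> Pc y (\<sigma> i))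
             \<and> L y = \<sigma> ` {1..card (L y)}
             \<and> (\<forall>l \<in> {1..card (L y)}. Pc y (\<sigma> l) = \<alpha> y)
             \<and> (\<forall>l \<in> {card (L y)<..CARD('x)}.
                  Pc y (\<sigma> l) = (1 - \<alpha> y * real (card (L y))) / (real CARD('x) - real (card (L y)))))
         \<longrightarrow> list_error PY Pc L = lower_bound13 PY Pc L \<gamma>)"
proof -
  interpret prob_space PY by fact
  have separated: "x \<in> L y \<Longrightarrow> \<gamma> / real CARD('x) \<le> Pc y x" "x \<notin> L y \<Longrightarrow> Pc y x \<le> \<gamma> / real CARD('x)"
    if "1 \<le> \<gamma>" and "\<forall>y. \<gamma> / real CARD('x) \<le> \<alpha> y \<and> \<alpha> y \<le> 1 / real (card (L y))"
      and "\<forall>y. \<exists>\<sigma> :: nat \<Rightarrow> 'x.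
               bij_betw \<sigma> {1..CARD('x)} UNIV
             \<and> (\<forall>i j. 1 \<le> i \<and> i \<le> j \<and> j \<le> CARD('x) \<longrightarrow> Pc y (\<sigma> j) \<le> Pc y (\<sigma> i))
             \<and> L y = \<sigma> ` {1..card (L y)}
             \<and> (\<forall>l \<in> {1..card (L y)}. Pc y (\<sigma> l) = \<alpha> y)
             \<and> (\<forall>l \<in> {card (L y)<..CARD('x)}.
                  Pc y (\<sigma> l) = (1 - \<alpha> y * real (card (L y))) / (real CARD('x) - real (card (L y))))"
    for \<gamma> \<alpha> y x
  proof -
    from that(3) obtain \<sigma> where flat: "bij_betw \<sigma> {1..CARD('x)} UNIV" "L y = \<sigma> ` {1..card (L y)}"
        "\<forall>l \<in> {1..card (L y)}. Pc y (\<sigma> l) = \<alpha> y"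
        "\<forall>l \<in> {card (L y)<..CARD('x)}.
           Pc y (\<sigma> l) = (1 - \<alpha> y * real (card (L y))) / (real CARD('x) - real (card (L y)))"
      by (elim allE[of _ y] exE conjE) (rule that)
    from that(1,2) have "\<gamma> / real CARD('x) \<le> \<alpha> y" "1 \<le> \<gamma> / real CARD('x) * real CARD('x)"
      by auto
    from flat_profile_separated_by_threshold[OF flat this]
    show "x \<in> L y \<Longrightarrow> \<gamma> / real CARD('x) \<le> Pc y x" "x \<notin> L y \<Longrightarrow> Pc y x \<le> \<gamma> / real CARD('x)"
      by blast+
  qed
  show ?thesis
    by (intro conjI allI impI lower_bound13_le_list_error list_error_eq_lower_bound13 assms(2-5))
       (elim conjE, rule separated; assumption)+
qed

end
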